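(* Let $\Phi: H_n\to H_k$ be a trace-preserving unital linear map and let $\rho\in H_n\otimes H_m$ be Hermitian. Then \[ {\rm Tr}\left[\left((\Phi\otimes\mathrm{id})(\rho)\right)^2\right]\leq\left(\frac1k-\frac{\|A_\Phi\|_\infty}{n}\right){\rm Tr}\left[\rho_K^2\right]+\|A_\Phi\|_\infty\,{\rm Tr}\left[\rho^2\right], \] where $\mathrm{id}$ is the identity map on $H_m$ and $\rho_K={\rm Tr}_{H_n}[\rho]\in H_m$ is the partial trace over the first factor.
   Context: $H_n$ is the real vector space of $n\times n$ Hermitian matrices with inner product ${\rm Tr}(XY)$, and $H_{n,0}$ its subspace of traceless matrices. A linear map $\Phi:H_n\to H_k$ is unital if $\Phi(I_n/n)=I_k/k$. Fix an orthonormal basis $M_1,\dots,M_{n^2-1}$ of $H_{n,0}$ and define the real symmetric positive semidefinite matrix $A_\Phi$ by $(A_\Phi)_{i,j}={\rm Tr}[\Phi(M_i)\Phi(M_j)]$, $1\le i,j\le n^2-1$; $\|A_\Phi\|_\infty$ is its largest eigenvalue (independent of the chosen basis). *)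

theory Defs
  imports "Jordan_Normal_Form.Matrix" "Jordan_Normal_Form.Char_Poly" "HOL.Complex"
begin

definition mtrace :: "'a::comm_ring_1 mat \<Rightarrow> 'a" where
  "mtrace A = (\<Sum>i<dim_row A. A $$ (i, i))"

definition Herm :: "nat \<Rightarrow> complex mat set" where
  "Herm n = {A \<in> carrier_mat n n. \<forall>i<n. \<forall>j<n. A $$ (i, j) = cnj (A $$ (j, i))}"

definition Herm0 :: "nat \<Rightarrow> complex mat set" where
  "Herm0 n = {A \<in> Herm n. mtrace A = 0}"

definition herm_linear_map :: "nat \<Rightarrow> nat \<Rightarrow> (complex mat \<Rightarrow> complex mat) \<Rightarrow> bool" where
  "herm_linear_map n k \<Phi> \<longleftrightarrow>
     (\<forall>X\<in>Herm n. \<Phi> X \<in> Herm k) \<and>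
     (\<forall>X\<in>Herm n. \<forall>Y\<in>Herm n. \<forall>a b :: real.
        \<Phi> (complex_of_real a \<cdot>\<^sub>m X + complex_of_real b \<cdot>\<^sub>m Y)
          = complex_of_real a \<cdot>\<^sub>m \<Phi> X + complex_of_real b \<cdot>\<^sub>m \<Phi> Y)"

definition trace_preserving :: "nat \<Rightarrow> (complex mat \<Rightarrow> complex mat) \<Rightarrow> bool" where
  "trace_preserving n \<Phi> \<longleftrightarrow> (\<forall>X\<in>Herm n. mtrace (\<Phi> X) = mtrace X)"

definition unital :: "nat \<Rightarrow> nat \<Rightarrow> (complex mat \<Rightarrow> complex mat) \<Rightarrow> bool" where
  "unital n k \<Phi> \<longleftrightarrow>
     \<Phi> (complex_of_real (1 / real n) \<cdot>\<^sub>m 1\<^sub>m n) = complex_of_real (1 / real k) \<cdot>\<^sub>m 1\<^sub>m k"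

definition adj :: "complex mat \<Rightarrow> complex mat" where
  "adj A = mat (dim_col A) (dim_row A) (\<lambda>(i, j). cnj (A $$ (j, i)))"

(* complex-linear extension of Phi from H_n to all n x n complex matrices:
   X = H + i K, H = (X + adj X)/2, K = (X - adj X)/(2i) Hermitian *)
definition cext :: "(complex mat \<Rightarrow> complex mat) \<Rightarrow> complex mat \<Rightarrow> complex mat" where
  "cext \<Phi> X = \<Phi> ((1/2) \<cdot>\<^sub>m (X + adj X)) + \<i> \<cdot>\<^sub>m \<Phi> ((1 / (2 * \<i>)) \<cdot>\<^sub>m (X - adj X))"

(* H_n (x) H_m realised as (n*m) x (n*m) matrices, index (i,a) <-> i*m + a (Kronecker order).
   block rho a b = (I (x) <a|) rho (I (x) |b>) *)
definition block2 :: "nat \<Rightarrow> nat \<Rightarrow> complex mat \<Rightarrow> nat \<Rightarrow> nat \<Rightarrow> complex mat" where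
  "block2 n m \<rho> a b = mat n n (\<lambda>(i, j). \<rho> $$ (i * m + a, j * m + b))"

(* (Phi (x) id)(rho) = sum_{a,b} Phi(block a b) (x) |a><b| *)
definition tensor_id :: "nat \<Rightarrow> nat \<Rightarrow> nat \<Rightarrow> (complex mat \<Rightarrow> complex mat) \<Rightarrow> complex mat \<Rightarrow> complex mat" where
  "tensor_id n k m \<Phi> \<rho> = mat (k * m) (k * m)
     (\<lambda>(r, s). cext \<Phi> (block2 n m \<rho> (r mod m) (s mod m)) $$ (r div m, s div m))"

definition ptrace1 :: "nat \<Rightarrow> nat \<Rightarrow> complex mat \<Rightarrow> complex mat" where
  "ptrace1 n m \<rho> = mat m m (\<lambda>(a, b). \<Sum>i<n. \<rho> $$ (i * m + a, i * m + b))"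

definition onb_Herm0 :: "nat \<Rightarrow> (nat \<Rightarrow> complex mat) \<Rightarrow> bool" where
  "onb_Herm0 n M \<longleftrightarrow>
     (\<forall>i < n^2 - 1. M i \<in> Herm0 n) \<and>
     (\<forall>i < n^2 - 1. \<forall>j < n^2 - 1. mtrace (M i * M j) = (if i = j then 1 else 0)) \<and>
     (\<forall>X\<in>Herm0 n. \<exists>c :: nat \<Rightarrow> real. \<forall>p<n. \<forall>q<n.
        X $$ (p, q) = (\<Sum>i < n^2 - 1. complex_of_real (c i) * M i $$ (p, q)))"

definition A_mat :: "nat \<Rightarrow> (complex mat \<Rightarrow> complex mat) \<Rightarrow> (nat \<Rightarrow> complex mat) \<Rightarrow> real mat" where
  "A_mat n \<Phi> M = mat (n^2 - 1) (n^2 - 1) (\<lambda>(i, j). Re (mtrace (\<Phi> (M i) * \<Phi> (M j))))"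

definition lambda_max :: "real mat \<Rightarrow> real" where
  "lambda_max A = Max {l. eigenvalue A l}"

end

theory Submission
  imports Defs "HOL-Analysis.Function_Topology"
begin

text \<open>Cut \<open>\<rho>\<close> into its \<open>n \<times> n\<close> blocks \<open>B\<^sub>a\<^sub>b\<close>; then
  \<open>Tr[((\<Phi> \<otimes> id) \<rho>)\<^sup>2] = \<Sum>\<^sub>a\<^sub>b Tr[\<Phi>(B\<^sub>a\<^sub>b) \<Phi>(B\<^sub>b\<^sub>a)]\<close> with \<open>B\<^sub>b\<^sub>a = B\<^sub>a\<^sub>b\<^sup>*\<close>,
  \<open>Tr \<rho>\<^sup>2 = \<Sum>\<^sub>a\<^sub>b Tr[B\<^sub>a\<^sub>b B\<^sub>b\<^sub>a]\<close> and \<open>(\<rho>\<^sub>K)\<^sub>a\<^sub>b = Tr B\<^sub>a\<^sub>b\<close>, so it suffices to bound each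
  term. Splitting a block into Hermitian parts \<open>H + iK\<close> reduces this to a Hermitian \<open>X\<close>.
  Write \<open>X = (Tr X / n) I + X\<^sub>0\<close> with \<open>X\<^sub>0\<close> traceless: unitality and trace preservation give
  \<open>Tr[\<Phi>(X)\<^sup>2] = (Tr X)\<^sup>2/k + Tr[\<Phi>(X\<^sub>0)\<^sup>2]\<close> and \<open>Tr X\<^sup>2 = (Tr X)\<^sup>2/n + Tr X\<^sub>0\<^sup>2\<close>.
  In the orthonormal basis \<open>M\<^sub>i\<close>, \<open>Tr[\<Phi>(X\<^sub>0)\<^sup>2]\<close> is the quadratic form of \<open>A\<^sub>\<Phi>\<close> and
  \<open>Tr X\<^sub>0\<^sup>2\<close> the squared norm of the coefficient vector, so the Rayleigh bound
  \<open>x\<^sup>T A x \<le> \<lambda>\<^sub>m\<^sub>a\<^sub>x |x|\<^sup>2\<close> finishes the proof.\<close>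

definition quad_form :: "nat \<Rightarrow> real mat \<Rightarrow> (nat \<Rightarrow> real) \<Rightarrow> real" where
  "quad_form N A x = (\<Sum>i<N. \<Sum>j<N. x i * A $$ (i, j) * x j)"

definition sum_sq :: "nat \<Rightarrow> (nat \<Rightarrow> real) \<Rightarrow> real" where
  "sum_sq N x = (\<Sum>i<N. (x i)\<^sup>2)"

lemma quad_form_add_scaled:
  "quad_form N A (\<lambda>i. x i + t * y i) = quad_form N A x
     + t * ((\<Sum>i<N. \<Sum>j<N. x i * A $$ (i, j) * y j) + (\<Sum>i<N. \<Sum>j<N. y i * A $$ (i, j) * x j))
     + t\<^sup>2 * quad_form N A y"
proof -
  have "(x i + t * y i) * A $$ (i, j) * (x j + t * y j) = x i * A $$ (i, j) * x j
      + t * (x i * A $$ (i, j) * y j) + t * (y i * A $$ (i, j) * x j) + t\<^sup>2 * (y i * A $$ (i, j) * y j)"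
    for i j by (simp add: algebra_simps power2_eq_square)
  then show ?thesis
    unfolding quad_form_def by (simp only: sum.distrib sum_distrib_left distrib_left add.assoc)
qed

lemma sum_sq_add_scaled:
  "sum_sq N (\<lambda>i. x i + t * y i) = sum_sq N x + 2 * t * (\<Sum>i<N. x i * y i) + t\<^sup>2 * sum_sq N y"
proof -
  have "(x i + t * y i)\<^sup>2 = (x i)\<^sup>2 + 2 * t * (x i * y i) + t\<^sup>2 * (y i)\<^sup>2" for i
    by (simp add: algebra_simps power2_eq_square)
  then show ?thesis
    unfolding sum_sq_def by (simp only: sum.distrib sum_distrib_left mult.assoc)
qed

lemma sum_sq_nonneg: "sum_sq N x \<ge> 0"
  unfolding sum_sq_def by (simp add: sum_nonneg)

lemma sum_sq_eq_0_iff: "sum_sq N x = 0 \<longleftrightarrow> (\<forall>i<N. x i = 0)"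
  unfolding sum_sq_def by (auto simp: sum_nonneg_eq_0_iff)

lemma linear_plus_quadratic_nonpos_imp_zero:
  fixes a b :: real
  assumes "\<And>t. a * t + b * t\<^sup>2 \<le> 0"
  shows "a = 0"
proof (rule ccontr)
  assume "a \<noteq> 0"
  define s where "s = 1 / (\<bar>b\<bar> + 1)"
  have s: "s > 0" "\<bar>b\<bar> * s < 1"
    unfolding s_def by (auto simp: field_simps)
  then have "1 + b * s > 0"
    using abs_ge_minus_self[of b] mult_right_mono[of "- b" "\<bar>b\<bar>" s] by simp
  with s \<open>a \<noteq> 0\<close> have "a\<^sup>2 * (s * (1 + b * s)) > 0"
    by simp
  moreover have "a * (s * a) + b * (s * a)\<^sup>2 \<le> 0"
    by (rule assms)
  then have "a\<^sup>2 * (s * (1 + b * s)) \<le> 0"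
    by (simp add: algebra_simps power2_eq_square)
  ultimately show False
    by linarith
qed

lemma compactin_sum_sq_sphere:
  "compactin (product_topology (\<lambda>_. euclideanreal) {..<N})
     {x \<in> topspace (product_topology (\<lambda>_. euclideanreal) {..<N}). sum_sq N x = 1}"
  (is "compactin ?X ?S")
proof (rule closed_compactin)
  show "compactin ?X (PiE {..<N} (\<lambda>_. {-1..1}))"
    by (subst compactin_PiE) auto
  have "continuous_map ?X euclideanreal (sum_sq N)"
    unfolding sum_sq_def by (auto intro!: continuous_intros)
  then show "closedin ?X ?S"
    using closedin_continuous_map_preimage[of ?X euclideanreal "sum_sq N" "{1}"] by auto
  show "?S \<subseteq> PiE {..<N} (\<lambda>_. {-1..1})"
  proof
    fix x assume x: "x \<in> ?S"
    have "\<bar>x i\<bar> \<le> 1" if "i < N" for i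
    proof -
      have "(x i)\<^sup>2 \<le> sum_sq N x"
        unfolding sum_sq_def by (rule member_le_sum) (use that in auto)
      with x show ?thesis
        by (simp add: abs_square_le_1)
    qed
    with x show "x \<in> PiE {..<N} (\<lambda>_. {-1..1})"
      by (auto simp: topspace_product_topology PiE_def Pi_def abs_le_iff)
  qed
qed

lemma quad_form_attains_max_on_sphere:
  assumes "N > 0"
  obtains x0 where "sum_sq N x0 = 1" "\<And>x. sum_sq N x = 1 \<Longrightarrow> quad_form N A x \<le> quad_form N A x0"
proof -
  define X where "X = product_topology (\<lambda>_. euclideanreal) {..<N}"
  define S where "S = {x \<in> topspace X. sum_sq N x = 1}"
  have "continuous_map X euclideanreal (quad_form N A)"
    unfolding quad_form_def X_def by (auto intro!: continuous_intros)
  then have "compactin euclideanreal (quad_form N A ` S)"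
    by (rule image_compactin[OF compactin_sum_sq_sphere[of N, folded X_def, folded S_def]])
  moreover have "restrict (\<lambda>i. if i = 0 then 1 else 0) {..<N} \<in> S"
    using assms by (simp add: S_def X_def topspace_product_topology sum_sq_def
        if_distrib[of "\<lambda>x. x\<^sup>2"] cong: if_cong)
  ultimately obtain x0 where x0: "x0 \<in> S" "\<forall>x\<in>S. quad_form N A x \<le> quad_form N A x0"
    using compact_attains_sup[of "quad_form N A ` S"] by auto
  show ?thesis
  proof
    show "sum_sq N x0 = 1"
      using x0 by (simp add: S_def)
    fix x assume "sum_sq N x = 1"
    then have "restrict x {..<N} \<in> S"
      by (simp add: S_def X_def topspace_product_topology sum_sq_def)
    moreover have "quad_form N A (restrict x {..<N}) = quad_form N A x"
      by (simp add: quad_form_def)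
    ultimately show "quad_form N A x \<le> quad_form N A x0"
      using x0 by metis
  qed
qed

lemma quad_form_le_max_sum_sq:
  assumes x0: "sum_sq N x0 = 1" "\<And>x. sum_sq N x = 1 \<Longrightarrow> quad_form N A x \<le> quad_form N A x0"
  shows "quad_form N A y \<le> quad_form N A x0 * sum_sq N y"
proof (cases "sum_sq N y = 0")
  case True
  then have "quad_form N A y = 0"
    by (simp add: sum_sq_eq_0_iff quad_form_def)
  with True show ?thesis
    by simp
next
  case False
  define c where "c = sqrt (sum_sq N y)"
  have pos: "sum_sq N y > 0"
    using False sum_sq_nonneg[of N y] by linarith
  then have c: "c > 0" "c\<^sup>2 = sum_sq N y"
    by (auto simp: c_def)
  have "sum_sq N (\<lambda>i. y i / c) = 1"
    using c False unfolding sum_sq_def by (simp add: power_divide flip: sum_divide_distrib)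
  then have "quad_form N A (\<lambda>i. y i / c) \<le> quad_form N A x0"
    by (rule x0(2))
  moreover have "quad_form N A (\<lambda>i. y i / c) = quad_form N A y / c\<^sup>2"
    by (simp add: quad_form_def sum_divide_distrib power2_eq_square)
  ultimately have "quad_form N A y / sum_sq N y \<le> quad_form N A x0"
    using c by simp
  then show ?thesis
    by (simp add: pos_divide_le_eq[OF pos])
qed

text \<open>Where the bound is attained, \<open>quad_form - \<mu> * sum_sq\<close> is maximal, so its gradient
  \<open>2 (A x - \<mu> x)\<close> vanishes.\<close>
lemma quad_form_bound_attained_imp_eigen:
  assumes sym: "\<And>i j. i < N \<Longrightarrow> j < N \<Longrightarrow> A $$ (i, j) = A $$ (j, i)"
    and bound: "\<And>y. quad_form N A y \<le> \<mu> * sum_sq N y"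
    and attained: "quad_form N A x = \<mu> * sum_sq N x"
    and "p < N"
  shows "(\<Sum>j<N. A $$ (p, j) * x j) = \<mu> * x p"
proof -
  define e where "e = (\<lambda>i. if i = p then 1 else 0 :: real)"
  define w where "w = (\<Sum>j<N. A $$ (p, j) * x j)"
  have "(\<Sum>i<N. \<Sum>j<N. x i * A $$ (i, j) * e j) = w"
    using \<open>p < N\<close> by (auto simp: e_def w_def if_distrib[of "\<lambda>z. z * _"] if_distrib[of "\<lambda>z. _ * z"]
        sym mult.commute intro!: sum.cong cong: if_cong)
  moreover have "(\<Sum>i<N. \<Sum>j<N. e i * A $$ (i, j) * x j) = w"
  proof -
    have "(\<Sum>i<N. \<Sum>j<N. e i * A $$ (i, j) * x j) = (\<Sum>i<N. e i * (\<Sum>j<N. A $$ (i, j) * x j))"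
      by (simp add: mult.assoc sum_distrib_left)
    with \<open>p < N\<close> show ?thesis
      by (simp add: e_def w_def if_distrib[of "\<lambda>z. z * _"] cong: if_cong)
  qed
  moreover have "quad_form N A e = A $$ (p, p)" "sum_sq N e = 1" "(\<Sum>i<N. x i * e i) = x p"
    using \<open>p < N\<close> by (simp_all add: quad_form_def sum_sq_def e_def if_distrib[of "\<lambda>z. _ * z"]
        if_distrib[of "\<lambda>z. z * _"] if_distrib[of "\<lambda>z. z\<^sup>2"] cong: if_cong)
  ultimately have "2 * (w - \<mu> * x p) * t + (A $$ (p, p) - \<mu>) * t\<^sup>2 \<le> 0" for t
    using bound[of "\<lambda>i. x i + t * e i"] attained
    by (simp add: quad_form_add_scaled sum_sq_add_scaled algebra_simps)
  then have "2 * (w - \<mu> * x p) = 0"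
    by (rule linear_plus_quadratic_nonpos_imp_zero)
  then show ?thesis
    by (simp add: w_def)
qed

lemma eigenvalue_le_of_quad_form_bound:
  assumes A: "A \<in> carrier_mat N N"
    and bound: "\<And>y. quad_form N A y \<le> \<mu> * sum_sq N y"
    and "eigenvalue A l"
  shows "l \<le> \<mu>"
proof -
  obtain u where u: "u \<in> carrier_vec N" "u \<noteq> 0\<^sub>v N" "A *\<^sub>v u = l \<cdot>\<^sub>v u"
    using \<open>eigenvalue A l\<close> A unfolding eigenvalue_def eigenvector_def by auto
  define y where "y = (\<lambda>i. u $ i)"
  have "quad_form N A y = (\<Sum>i<N. y i * (A *\<^sub>v u) $ i)"
    unfolding quad_form_def using A u(1)
    by (intro sum.cong refl) (simp add: y_def scalar_prod_def atLeast0LessThan sum_distrib_left mult.assoc)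
  also have "\<dots> = l * sum_sq N y"
    using u(1,3) by (simp add: sum_sq_def y_def sum_distrib_left power2_eq_square mult_ac)
  finally have "quad_form N A y = l * sum_sq N y" .
  moreover have "sum_sq N y \<noteq> 0"
    using u(1,2) by (auto simp: sum_sq_eq_0_iff y_def)
  then have "sum_sq N y > 0"
    using sum_sq_nonneg[of N y] by linarith
  ultimately show ?thesis
    using bound[of y] by simp
qed

lemma finite_eigenvalues:
  fixes A :: "'a :: field mat"
  assumes "A \<in> carrier_mat N N"
  shows "finite {l. eigenvalue A l}"
proof -
  have "char_poly A \<noteq> 0"
    using degree_monic_char_poly[OF assms] by auto
  then show ?thesis
    using poly_roots_finite eigenvalue_root_char_poly[OF assms] by simp
qed

lemma quad_form_le_lambda_max:
  assumes A: "A \<in> carrier_mat N N"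
    and sym: "\<And>i j. i < N \<Longrightarrow> j < N \<Longrightarrow> A $$ (i, j) = A $$ (j, i)"
  shows "quad_form N A x \<le> lambda_max A * sum_sq N x"
proof (cases "N = 0")
  case True
  then show ?thesis
    by (simp add: quad_form_def sum_sq_def)
next
  case False
  obtain x0 where x0: "sum_sq N x0 = 1" "\<And>x. sum_sq N x = 1 \<Longrightarrow> quad_form N A x \<le> quad_form N A x0"
    using quad_form_attains_max_on_sphere[of N] False by blast
  define \<mu> where "\<mu> = quad_form N A x0"
  have bound: "quad_form N A y \<le> \<mu> * sum_sq N y" for y
    using quad_form_le_max_sum_sq[OF x0] by (simp add: \<mu>_def)
  define v where "v = vec N x0"
  have "A *\<^sub>v v = \<mu> \<cdot>\<^sub>v v"
    using A quad_form_bound_attained_imp_eigen[OF sym bound, of x0] x0(1)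
    by (intro eq_vecI) (auto simp: v_def \<mu>_def scalar_prod_def atLeast0LessThan)
  moreover have "v \<noteq> 0\<^sub>v N"
    using x0(1) sum_sq_eq_0_iff[of N x0] by (auto simp: v_def vec_eq_iff)
  ultimately have "eigenvalue A \<mu>"
    using A unfolding eigenvalue_def eigenvector_def v_def by (metis carrier_matD(1) vec_carrier)
  then have "lambda_max A = \<mu>"
    unfolding lambda_max_def
    using finite_eigenvalues[OF A] eigenvalue_le_of_quad_form_bound[OF A bound] by (intro Max_eqI) auto
  with bound show ?thesis
    by simp
qed

lemma mtrace_mult:
  assumes "A \<in> carrier_mat d e" "B \<in> carrier_mat e d"
  shows "mtrace (A * B) = (\<Sum>i<d. \<Sum>j<e. A $$ (i, j) * B $$ (j, i))"
  using assms unfolding mtrace_def by (auto simp: scalar_prod_def atLeast0LessThan intro!: sum.cong)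

lemma mtrace_mult_comm:
  assumes "A \<in> carrier_mat d e" "B \<in> carrier_mat e d"
  shows "mtrace (A * B) = mtrace (B * A)"
  unfolding mtrace_mult[OF assms] mtrace_mult[OF assms(2,1)]
  by (subst sum.swap) (simp add: mult.commute)

lemma mtrace_square_lincomb:
  fixes N :: nat and c :: "nat \<Rightarrow> 'a :: comm_ring_1"
  assumes B: "\<And>i. i < N \<Longrightarrow> B i \<in> carrier_mat d d"
  defines "S \<equiv> mat d d (\<lambda>pq. \<Sum>i<N. c i * B i $$ pq)"
  shows "mtrace (S * S) = (\<Sum>i<N. \<Sum>j<N. c i * c j * mtrace (B i * B j))"
proof -
  have S: "S \<in> carrier_mat d d"
    by (simp add: S_def)
  have "mtrace (S * S) = (\<Sum>p<d. \<Sum>q<d. \<Sum>i<N. \<Sum>j<N. c i * c j * (B i $$ (p, q) * B j $$ (q, p)))"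
    unfolding mtrace_mult[OF S S] by (auto simp: S_def sum_product mult_ac intro!: sum.cong)
  also have "\<dots> = (\<Sum>i<N. \<Sum>j<N. \<Sum>p<d. \<Sum>q<d. c i * c j * (B i $$ (p, q) * B j $$ (q, p)))"
    by (simp add: sum.swap[of _ "{..<d}" "{..<N}"])
  also have "\<dots> = (\<Sum>i<N. \<Sum>j<N. c i * c j * mtrace (B i * B j))"
    by (intro sum.cong refl) (simp add: mtrace_mult[OF B B] sum_distrib_left)
  finally show ?thesis .
qed

lemma HermI:
  assumes "X \<in> carrier_mat d d" "\<And>i j. i < d \<Longrightarrow> j < d \<Longrightarrow> X $$ (i, j) = cnj (X $$ (j, i))"
  shows "X \<in> Herm d"
  using assms unfolding Herm_def by blast

lemma Herm_carrier: "X \<in> Herm d \<Longrightarrow> X \<in> carrier_mat d d"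
  unfolding Herm_def by blast

lemma Herm_cnj: "X \<in> Herm d \<Longrightarrow> i < d \<Longrightarrow> j < d \<Longrightarrow> X $$ (i, j) = cnj (X $$ (j, i))"
  unfolding Herm_def by blast

lemma Herm_add:
  assumes X: "X \<in> Herm d" and Y: "Y \<in> Herm d"
  shows "X + Y \<in> Herm d"
proof (rule HermI)
  show "X + Y \<in> carrier_mat d d"
    using Herm_carrier[OF X] Herm_carrier[OF Y] by simp
  fix i j assume ij: "i < d" "j < d"
  then show "(X + Y) $$ (i, j) = cnj ((X + Y) $$ (j, i))"
    using Herm_carrier[OF X] Herm_carrier[OF Y] Herm_cnj[OF X ij] Herm_cnj[OF Y ij] by simp
qed

lemma Herm_smult_of_real:
  assumes X: "X \<in> Herm d"
  shows "complex_of_real a \<cdot>\<^sub>m X \<in> Herm d"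
proof (rule HermI)
  show "complex_of_real a \<cdot>\<^sub>m X \<in> carrier_mat d d"
    using Herm_carrier[OF X] by simp
  fix i j assume ij: "i < d" "j < d"
  then show "(complex_of_real a \<cdot>\<^sub>m X) $$ (i, j) = cnj ((complex_of_real a \<cdot>\<^sub>m X) $$ (j, i))"
    using Herm_carrier[OF X] Herm_cnj[OF X ij] by simp
qed

lemma Im_mtrace_Herm:
  assumes "X \<in> Herm d"
  shows "Im (mtrace X) = 0"
proof -
  have "Im (X $$ (i, i)) = 0" if "i < d" for i
    using arg_cong[OF Herm_cnj[OF assms that that], of Im] by simp
  then show ?thesis
    using Herm_carrier[OF assms] by (simp add: mtrace_def Im_sum)
qed

lemma herm_linear_map_Herm: "herm_linear_map n k \<Phi> \<Longrightarrow> X \<in> Herm n \<Longrightarrow> \<Phi> X \<in> Herm k"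
  unfolding herm_linear_map_def by blast

lemma herm_linear_map_carrier: "herm_linear_map n k \<Phi> \<Longrightarrow> X \<in> Herm n \<Longrightarrow> \<Phi> X \<in> carrier_mat k k"
  using herm_linear_map_Herm Herm_carrier by blast

lemma herm_linear_map_lincomb:
  "herm_linear_map n k \<Phi> \<Longrightarrow> X \<in> Herm n \<Longrightarrow> Y \<in> Herm n \<Longrightarrow>
    \<Phi> (complex_of_real a \<cdot>\<^sub>m X + complex_of_real b \<cdot>\<^sub>m Y)
      = complex_of_real a \<cdot>\<^sub>m \<Phi> X + complex_of_real b \<cdot>\<^sub>m \<Phi> Y"
  unfolding herm_linear_map_def by blast

lemma herm_linear_map_smult:
  assumes lin: "herm_linear_map n k \<Phi>" and X: "X \<in> Herm n"
  shows "\<Phi> (complex_of_real a \<cdot>\<^sub>m X) = complex_of_real a \<cdot>\<^sub>m \<Phi> X"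
proof -
  have "complex_of_real a \<cdot>\<^sub>m X + complex_of_real 0 \<cdot>\<^sub>m X = complex_of_real a \<cdot>\<^sub>m X"
    using Herm_carrier[OF X] by (intro eq_matI) auto
  moreover have "complex_of_real a \<cdot>\<^sub>m \<Phi> X + complex_of_real 0 \<cdot>\<^sub>m \<Phi> X = complex_of_real a \<cdot>\<^sub>m \<Phi> X"
    using herm_linear_map_carrier[OF lin X] by (intro eq_matI) auto
  ultimately show ?thesis
    using herm_linear_map_lincomb[OF lin X X, of a 0] by simp
qed

lemma herm_linear_map_add:
  assumes lin: "herm_linear_map n k \<Phi>" and X: "X \<in> Herm n" and Y: "Y \<in> Herm n"
  shows "\<Phi> (X + Y) = \<Phi> X + \<Phi> Y"
proof -
  have "complex_of_real 1 \<cdot>\<^sub>m X + complex_of_real 1 \<cdot>\<^sub>m Y = X + Y"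
    using Herm_carrier[OF X] Herm_carrier[OF Y] by (intro eq_matI) auto
  moreover have "complex_of_real 1 \<cdot>\<^sub>m \<Phi> X + complex_of_real 1 \<cdot>\<^sub>m \<Phi> Y = \<Phi> X + \<Phi> Y"
    using herm_linear_map_carrier[OF lin X] herm_linear_map_carrier[OF lin Y] by (intro eq_matI) auto
  ultimately show ?thesis
    using herm_linear_map_lincomb[OF lin X Y, of 1 1] by simp
qed

lemma herm_linear_map_sum:
  fixes N :: nat and c :: "nat \<Rightarrow> real"
  assumes lin: "herm_linear_map n k \<Phi>" and B: "\<And>i. i < N \<Longrightarrow> B i \<in> Herm n"
  shows "mat n n (\<lambda>pq. \<Sum>i<N. complex_of_real (c i) * B i $$ pq) \<in> Herm n \<and>
    \<Phi> (mat n n (\<lambda>pq. \<Sum>i<N. complex_of_real (c i) * B i $$ pq))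
      = mat k k (\<lambda>pq. \<Sum>i<N. complex_of_real (c i) * \<Phi> (B i) $$ pq)"
  using B
proof (induction N)
  case 0
  have zero: "0\<^sub>m n n \<in> Herm n"
    by (rule HermI) auto
  have "\<Phi> (0\<^sub>m n n) = complex_of_real 0 \<cdot>\<^sub>m \<Phi> (0\<^sub>m n n)"
    using herm_linear_map_smult[OF lin zero, of 0] by simp
  also have "\<dots> = 0\<^sub>m k k"
    using herm_linear_map_carrier[OF lin zero] by (intro eq_matI) auto
  finally show ?case
    using zero by (simp add: zero_mat_def)
next
  case (Suc N)
  define S where "S = mat n n (\<lambda>pq. \<Sum>i<N. complex_of_real (c i) * B i $$ pq)"
  have IH: "S \<in> Herm n" "\<Phi> S = mat k k (\<lambda>pq. \<Sum>i<N. complex_of_real (c i) * \<Phi> (B i) $$ pq)"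
    using Suc by (simp_all add: S_def)
  have BN: "B N \<in> Herm n" and cBN: "complex_of_real (c N) \<cdot>\<^sub>m B N \<in> Herm n"
    using Suc.prems Herm_smult_of_real by auto
  have "mat n n (\<lambda>pq. \<Sum>i<Suc N. complex_of_real (c i) * B i $$ pq) = S + complex_of_real (c N) \<cdot>\<^sub>m B N"
    using Herm_carrier[OF BN] by (intro eq_matI) (auto simp: S_def)
  moreover have "\<Phi> (S + complex_of_real (c N) \<cdot>\<^sub>m B N)
      = mat k k (\<lambda>pq. \<Sum>i<Suc N. complex_of_real (c i) * \<Phi> (B i) $$ pq)"
    using herm_linear_map_carrier[OF lin BN]
    by (simp add: herm_linear_map_add[OF lin IH(1) cBN] herm_linear_map_smult[OF lin BN] IH(2))
      (intro eq_matI, auto)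
  ultimately show ?case
    using Herm_add[OF IH(1) cBN] by simp
qed

lemma onb_Herm0_expansion:
  assumes "onb_Herm0 n M" "X \<in> Herm0 n"
  obtains c :: "nat \<Rightarrow> real"
  where "X = mat n n (\<lambda>pq. \<Sum>i<n\<^sup>2 - 1. complex_of_real (c i) * M i $$ pq)"
proof -
  obtain c :: "nat \<Rightarrow> real"
    where c: "\<forall>p<n. \<forall>q<n. X $$ (p, q) = (\<Sum>i<n\<^sup>2 - 1. complex_of_real (c i) * M i $$ (p, q))"
    using assms unfolding onb_Herm0_def by blast
  have "X \<in> carrier_mat n n"
    using assms(2) Herm_carrier unfolding Herm0_def by blast
  with c have "X = mat n n (\<lambda>pq. \<Sum>i<n\<^sup>2 - 1. complex_of_real (c i) * M i $$ pq)"
    by (intro eq_matI) auto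
  then show ?thesis
    by (rule that)
qed

lemma Re_mtrace_square_traceless_le:
  assumes lin: "herm_linear_map n k \<Phi>" and onb: "onb_Herm0 n M" and X: "X \<in> Herm0 n"
  shows "Re (mtrace (\<Phi> X * \<Phi> X)) \<le> lambda_max (A_mat n \<Phi> M) * Re (mtrace (X * X))"
proof -
  define N where "N = n\<^sup>2 - 1"
  define A where "A = A_mat n \<Phi> M"
  have M: "M i \<in> Herm n" if "i < N" for i
    using onb that unfolding onb_Herm0_def Herm0_def N_def by blast
  have orth: "mtrace (M i * M j) = (if i = j then 1 else 0)" if "i < N" "j < N" for i j
    using onb that unfolding onb_Herm0_def N_def by blast
  have PhiM: "\<Phi> (M i) \<in> carrier_mat k k" if "i < N" for i
    using herm_linear_map_carrier[OF lin M[OF that]] .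
  have A: "A \<in> carrier_mat N N" "\<And>i j. i < N \<Longrightarrow> j < N \<Longrightarrow> A $$ (i, j) = Re (mtrace (\<Phi> (M i) * \<Phi> (M j)))"
    by (simp_all add: A_def A_mat_def N_def)
  obtain c where c: "X = mat n n (\<lambda>pq. \<Sum>i<N. complex_of_real (c i) * M i $$ pq)"
    using onb_Herm0_expansion[OF onb X] unfolding N_def by blast
  have "\<Phi> X = mat k k (\<lambda>pq. \<Sum>i<N. complex_of_real (c i) * \<Phi> (M i) $$ pq)"
    using herm_linear_map_sum[OF lin M] c by simp
  then have "Re (mtrace (\<Phi> X * \<Phi> X)) = quad_form N A c"
    by (simp add: mtrace_square_lincomb[OF PhiM] quad_form_def Re_sum A(2) mult_ac)
  moreover have "Re (mtrace (X * X)) = sum_sq N c"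
    unfolding c using Herm_carrier[OF M]
    by (simp add: mtrace_square_lincomb[where d=n] orth sum_sq_def Re_sum power2_eq_square
        if_distrib[of "\<lambda>z. _ * z"] cong: if_cong)
  moreover have "A $$ (i, j) = A $$ (j, i)" if "i < N" "j < N" for i j
    using A(2) mtrace_mult_comm[OF PhiM PhiM] that by metis
  ultimately show ?thesis
    using quad_form_le_lambda_max[OF A(1)] by (simp add: A_def)
qed

lemma mtrace_square_shift:
  assumes Z: "Z \<in> carrier_mat d d"
  shows "mtrace ((c \<cdot>\<^sub>m 1\<^sub>m d + Z) * (c \<cdot>\<^sub>m 1\<^sub>m d + Z))
    = of_nat d * c\<^sup>2 + 2 * c * mtrace Z + mtrace (Z * Z)"
proof -
  have "(c * (if p = q then 1 else 0) + Z $$ (p, q)) * (c * (if q = p then 1 else 0) + Z $$ (q, p))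
      = (if q = p then c\<^sup>2 + 2 * c * Z $$ (p, p) else 0) + Z $$ (p, q) * Z $$ (q, p)" for p q
    by (auto simp: algebra_simps power2_eq_square)
  then have "mtrace ((c \<cdot>\<^sub>m 1\<^sub>m d + Z) * (c \<cdot>\<^sub>m 1\<^sub>m d + Z))
      = (\<Sum>p<d. c\<^sup>2 + 2 * c * Z $$ (p, p)) + (\<Sum>p<d. \<Sum>q<d. Z $$ (p, q) * Z $$ (q, p))"
    using Z by (simp add: mtrace_mult[of _ d d] sum.distrib)
  also have "(\<Sum>p<d. c\<^sup>2 + 2 * c * Z $$ (p, p)) = of_nat d * c\<^sup>2 + 2 * c * mtrace Z"
    using Z by (simp add: mtrace_def sum.distrib sum_distrib_left)
  also have "(\<Sum>p<d. \<Sum>q<d. Z $$ (p, q) * Z $$ (q, p)) = mtrace (Z * Z)"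
    by (simp add: mtrace_mult[OF Z Z])
  finally show ?thesis .
qed

lemma Herm_traceless_part:
  assumes "n > 0" and X: "X \<in> Herm n"
  shows "X - complex_of_real (Re (mtrace X) / real n) \<cdot>\<^sub>m 1\<^sub>m n \<in> Herm0 n"
proof -
  define c where "c = complex_of_real (Re (mtrace X) / real n)"
  have Xc: "X \<in> carrier_mat n n"
    using Herm_carrier[OF X] .
  have "X - c \<cdot>\<^sub>m 1\<^sub>m n \<in> Herm n"
  proof (rule HermI)
    fix i j assume ij: "i < n" "j < n"
    then show "(X - c \<cdot>\<^sub>m 1\<^sub>m n) $$ (i, j) = cnj ((X - c \<cdot>\<^sub>m 1\<^sub>m n) $$ (j, i))"
      using Xc Herm_cnj[OF X ij] by (simp add: c_def)
  qed (use Xc in auto)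
  moreover have "mtrace (X - c \<cdot>\<^sub>m 1\<^sub>m n) = mtrace X - of_nat n * c"
    using Xc by (simp add: mtrace_def sum_subtractf)
  moreover have "of_nat n * c = mtrace X"
    using \<open>n > 0\<close> Im_mtrace_Herm[OF X] by (simp add: c_def complex_eq_iff)
  ultimately show ?thesis
    by (simp add: Herm0_def c_def)
qed

lemma Re_mtrace_square_Herm_le:
  assumes "n > 0" "k > 0" and lin: "herm_linear_map n k \<Phi>" and tp: "trace_preserving n \<Phi>"
    and un: "unital n k \<Phi>" and onb: "onb_Herm0 n M" and X: "X \<in> Herm n"
  shows "Re (mtrace (\<Phi> X * \<Phi> X)) \<le> (1 / real k - lambda_max (A_mat n \<Phi> M) / real n) * (Re (mtrace X))\<^sup>2
      + lambda_max (A_mat n \<Phi> M) * Re (mtrace (X * X))"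
proof -
  define lam where "lam = lambda_max (A_mat n \<Phi> M)"
  define t where "t = Re (mtrace X)"
  define X0 where "X0 = X - complex_of_real (t / real n) \<cdot>\<^sub>m 1\<^sub>m n"
  have X0: "X0 \<in> Herm0 n"
    unfolding X0_def t_def using Herm_traceless_part[OF \<open>n > 0\<close> X] .
  then have X0h: "X0 \<in> Herm n" and trX0: "mtrace X0 = 0"
    by (simp_all add: Herm0_def)
  have X0c: "X0 \<in> carrier_mat n n"
    using Herm_carrier[OF X0h] .
  have I: "complex_of_real (1 / real n) \<cdot>\<^sub>m 1\<^sub>m n \<in> Herm n"
    by (rule HermI) auto
  have "X = complex_of_real t \<cdot>\<^sub>m (complex_of_real (1 / real n) \<cdot>\<^sub>m 1\<^sub>m n) + complex_of_real 1 \<cdot>\<^sub>m X0"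
    using Herm_carrier[OF X] by (intro eq_matI) (auto simp: X0_def)
  then have "\<Phi> X = complex_of_real t \<cdot>\<^sub>m (complex_of_real (1 / real k) \<cdot>\<^sub>m 1\<^sub>m k) + complex_of_real 1 \<cdot>\<^sub>m \<Phi> X0"
    using herm_linear_map_lincomb[OF lin I X0h, of t 1] un by (simp add: unital_def)
  also have "\<dots> = complex_of_real (t / real k) \<cdot>\<^sub>m 1\<^sub>m k + \<Phi> X0"
    using herm_linear_map_carrier[OF lin X0h] by (intro eq_matI) auto
  finally have "Re (mtrace (\<Phi> X * \<Phi> X)) = t\<^sup>2 / real k + Re (mtrace (\<Phi> X0 * \<Phi> X0))"
    using herm_linear_map_carrier[OF lin X0h] tp X0h trX0 \<open>k > 0\<close>
    by (simp add: mtrace_square_shift trace_preserving_def power2_eq_square)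
  moreover have "X = complex_of_real (t / real n) \<cdot>\<^sub>m 1\<^sub>m n + X0"
    using Herm_carrier[OF X] by (intro eq_matI) (auto simp: X0_def)
  then have "Re (mtrace (X * X)) = t\<^sup>2 / real n + Re (mtrace (X0 * X0))"
    using X0c trX0 \<open>n > 0\<close> by (simp add: mtrace_square_shift power2_eq_square)
  moreover have "Re (mtrace (\<Phi> X0 * \<Phi> X0)) \<le> lam * Re (mtrace (X0 * X0))"
    unfolding lam_def by (rule Re_mtrace_square_traceless_le[OF lin onb X0])
  ultimately show ?thesis
    unfolding lam_def[symmetric] t_def[symmetric] by (simp add: algebra_simps)
qed

lemma mtrace_add_smult:
  assumes "A \<in> carrier_mat d d" "B \<in> carrier_mat d d"
  shows "mtrace (A + c \<cdot>\<^sub>m B) = mtrace A + c * mtrace B"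
  using assms by (simp add: mtrace_def sum.distrib sum_distrib_left)

lemma mtrace_mult_conj_pair:
  assumes A: "A \<in> carrier_mat d d" and B: "B \<in> carrier_mat d d"
  shows "mtrace ((A + \<i> \<cdot>\<^sub>m B) * (A + (- \<i>) \<cdot>\<^sub>m B)) = mtrace (A * A) + mtrace (B * B)"
proof -
  have "(A $$ (p, q) + \<i> * B $$ (p, q)) * (A $$ (q, p) + - \<i> * B $$ (q, p))
      = A $$ (p, q) * A $$ (q, p) + B $$ (p, q) * B $$ (q, p)
        + \<i> * (B $$ (p, q) * A $$ (q, p) - A $$ (p, q) * B $$ (q, p))" for p q
    by (simp add: algebra_simps)
  moreover have "(\<Sum>p<d. \<Sum>q<d. B $$ (p, q) * A $$ (q, p)) = (\<Sum>p<d. \<Sum>q<d. A $$ (p, q) * B $$ (q, p))"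
    by (subst sum.swap) (simp add: mult.commute)
  ultimately show ?thesis
    using A B by (simp add: mtrace_mult[of _ d d] sum.distrib sum_subtractf flip: sum_distrib_left)
qed

lemma Herm_parts:
  assumes X: "X \<in> carrier_mat n n"
  defines "H \<equiv> (1 / 2) \<cdot>\<^sub>m (X + adj X)" and "K \<equiv> (1 / (2 * \<i>)) \<cdot>\<^sub>m (X - adj X)"
  shows "H \<in> Herm n" "K \<in> Herm n" "X = H + \<i> \<cdot>\<^sub>m K" "adj X = H + (- \<i>) \<cdot>\<^sub>m K"
    and "(1 / 2) \<cdot>\<^sub>m (adj X + adj (adj X)) = H"
    and "(1 / (2 * \<i>)) \<cdot>\<^sub>m (adj X - adj (adj X)) = complex_of_real (- 1) \<cdot>\<^sub>m K"
proof -
  have adj: "adj X \<in> carrier_mat n n" "\<And>i j. i < n \<Longrightarrow> j < n \<Longrightarrow> adj X $$ (i, j) = cnj (X $$ (j, i))"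
    using X by (auto simp: adj_def)
  have adj_adj: "adj (adj X) = X"
    using X by (intro eq_matI) (auto simp: adj_def)
  show "H \<in> Herm n" "K \<in> Herm n"
    using X adj by (auto intro!: HermI simp: H_def K_def field_simps)
  show "X = H + \<i> \<cdot>\<^sub>m K" "adj X = H + (- \<i>) \<cdot>\<^sub>m K"
    using X adj by (auto intro!: eq_matI simp: H_def K_def field_simps)
  show "(1 / 2) \<cdot>\<^sub>m (adj X + adj (adj X)) = H"
    "(1 / (2 * \<i>)) \<cdot>\<^sub>m (adj X - adj (adj X)) = complex_of_real (- 1) \<cdot>\<^sub>m K"
    using X adj by (auto intro!: eq_matI simp: adj_adj H_def K_def field_simps)
qed

lemma Re_mtrace_cext_adj_le:
  assumes "n > 0" "k > 0" and lin: "herm_linear_map n k \<Phi>" and tp: "trace_preserving n \<Phi>"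
    and un: "unital n k \<Phi>" and onb: "onb_Herm0 n M" and X: "X \<in> carrier_mat n n"
  shows "Re (mtrace (cext \<Phi> X * cext \<Phi> (adj X)))
    \<le> (1 / real k - lambda_max (A_mat n \<Phi> M) / real n) * Re (mtrace X * mtrace (adj X))
      + lambda_max (A_mat n \<Phi> M) * Re (mtrace (X * adj X))"
proof -
  define H where "H = (1 / 2) \<cdot>\<^sub>m (X + adj X)"
  define K where "K = (1 / (2 * \<i>)) \<cdot>\<^sub>m (X - adj X)"
  note parts = Herm_parts[OF X, folded H_def K_def]
  have HK: "H \<in> carrier_mat n n" "K \<in> carrier_mat n n"
    using parts(1,2) by (simp_all add: Herm_carrier)
  have PhiHK: "\<Phi> H \<in> carrier_mat k k" "\<Phi> K \<in> carrier_mat k k"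
    using parts(1,2) by (simp_all add: herm_linear_map_carrier[OF lin])
  have "cext \<Phi> X = \<Phi> H + \<i> \<cdot>\<^sub>m \<Phi> K"
    by (simp add: cext_def H_def K_def)
  moreover have "cext \<Phi> (adj X) = \<Phi> H + (- \<i>) \<cdot>\<^sub>m \<Phi> K"
    unfolding cext_def parts(5,6) herm_linear_map_smult[OF lin parts(2)]
    using PhiHK by (intro eq_matI) auto
  ultimately have "Re (mtrace (cext \<Phi> X * cext \<Phi> (adj X)))
      = Re (mtrace (\<Phi> H * \<Phi> H)) + Re (mtrace (\<Phi> K * \<Phi> K))"
    by (simp add: mtrace_mult_conj_pair[OF PhiHK])
  moreover have "Re (mtrace (X * adj X)) = Re (mtrace (H * H)) + Re (mtrace (K * K))"
    unfolding parts(4) by (subst parts(3)) (simp add: mtrace_mult_conj_pair[OF HK])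
  moreover have "Re (mtrace X * mtrace (adj X)) = (Re (mtrace H))\<^sup>2 + (Re (mtrace K))\<^sup>2"
    using Im_mtrace_Herm[OF parts(1)] Im_mtrace_Herm[OF parts(2)]
    unfolding parts(4) by (subst parts(3)) (simp add: mtrace_add_smult[OF HK] power2_eq_square)
  ultimately show ?thesis
    using Re_mtrace_square_Herm_le[OF assms(1-6) parts(1)] Re_mtrace_square_Herm_le[OF assms(1-6) parts(2)]
    by (simp add: algebra_simps)
qed

lemma mult_add_less_mult_nat:
  fixes p a k m :: nat
  assumes "p < k" "a < m"
  shows "p * m + a < k * m"
proof -
  have "p * m + a < (p + 1) * m"
    using assms(2) by simp
  also have "\<dots> \<le> k * m"
    using assms(1) by (intro mult_le_mono1) simp
  finally show ?thesis .
qed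

lemma sum_lessThan_mult_nat:
  fixes k m :: nat
  shows "(\<Sum>r<k * m. g r) = (\<Sum>p<k. \<Sum>a<m. g (p * m + a))"
proof -
  have "(\<Sum>a<m. g (p * m + a)) = sum g {p * m..<p * m + m}" for p
    using sum.shift_bounds_nat_ivl[of g 0 "p * m" m] by (simp add: atLeast0LessThan add.commute)
  then show ?thesis
    by (simp add: sum.nat_group)
qed

lemma mtrace_square_blocks:
  assumes T: "T \<in> carrier_mat (k * m) (k * m)" and F: "\<And>a b. F a b \<in> carrier_mat k k"
    and TF: "\<And>p a q b. p < k \<Longrightarrow> a < m \<Longrightarrow> q < k \<Longrightarrow> b < m \<Longrightarrow> T $$ (p * m + a, q * m + b) = F a b $$ (p, q)"
  shows "mtrace (T * T) = (\<Sum>a<m. \<Sum>b<m. mtrace (F a b * F b a))"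
proof -
  have "mtrace (T * T) = (\<Sum>p<k. \<Sum>a<m. \<Sum>q<k. \<Sum>b<m. F a b $$ (p, q) * F b a $$ (q, p))"
    by (simp add: mtrace_mult[OF T T] sum_lessThan_mult_nat TF)
  also have "\<dots> = (\<Sum>a<m. \<Sum>b<m. \<Sum>p<k. \<Sum>q<k. F a b $$ (p, q) * F b a $$ (q, p))"
    by (simp add: sum.swap[of _ "{..<k}" "{..<m}"])
  also have "\<dots> = (\<Sum>a<m. \<Sum>b<m. mtrace (F a b * F b a))"
    by (simp add: mtrace_mult[OF F F])
  finally show ?thesis .
qed

lemma block2_carrier: "block2 n m \<rho> a b \<in> carrier_mat n n"
  by (simp add: block2_def)

lemma block2_adj:
  assumes \<rho>: "\<rho> \<in> Herm (n * m)" and "a < m" "b < m"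
  shows "block2 n m \<rho> b a = adj (block2 n m \<rho> a b)"
proof (rule eq_matI)
  fix i j assume "i < dim_row (adj (block2 n m \<rho> a b))" "j < dim_col (adj (block2 n m \<rho> a b))"
  then have ij: "i < n" "j < n"
    by (simp_all add: adj_def block2_def)
  then show "block2 n m \<rho> b a $$ (i, j) = adj (block2 n m \<rho> a b) $$ (i, j)"
    using Herm_cnj[OF \<rho> mult_add_less_mult_nat[OF ij(1) \<open>b < m\<close>] mult_add_less_mult_nat[OF ij(2) \<open>a < m\<close>]]
    by (simp add: adj_def block2_def)
qed (simp_all add: adj_def block2_def)

lemma cext_carrier:
  assumes lin: "herm_linear_map n k \<Phi>" and X: "X \<in> carrier_mat n n"
  shows "cext \<Phi> X \<in> carrier_mat k k"
  using herm_linear_map_carrier[OF lin Herm_parts(1)[OF X]] herm_linear_map_carrier[OF lin Herm_parts(2)[OF X]]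
  by (simp add: cext_def)

lemma tensor_id_index:
  assumes "p < k" "a < m" "q < k" "b < m"
  shows "tensor_id n k m \<Phi> \<rho> $$ (p * m + a, q * m + b) = cext \<Phi> (block2 n m \<rho> a b) $$ (p, q)"
  using assms mult_add_less_mult_nat[OF assms(1,2)] mult_add_less_mult_nat[OF assms(3,4)]
  by (simp add: tensor_id_def)

lemma mtrace_square_ptrace1:
  "mtrace (ptrace1 n m \<rho> * ptrace1 n m \<rho>)
    = (\<Sum>a<m. \<Sum>b<m. mtrace (block2 n m \<rho> a b) * mtrace (block2 n m \<rho> b a))"
proof -
  have P: "ptrace1 n m \<rho> \<in> carrier_mat m m"
    by (simp add: ptrace1_def)
  show ?thesis
    unfolding mtrace_mult[OF P P] by (simp add: ptrace1_def mtrace_def block2_def)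
qed

theorem lemma8:
  fixes n k m :: nat and \<Phi> :: "complex mat \<Rightarrow> complex mat" and \<rho> :: "complex mat"
    and M :: "nat \<Rightarrow> complex mat"
  assumes "n > 0" and "k > 0" and "m > 0"
    and "herm_linear_map n k \<Phi>"
    and "trace_preserving n \<Phi>"
    and "unital n k \<Phi>"
    and "\<rho> \<in> Herm (n * m)"
    and "onb_Herm0 n M"
  shows "Re (mtrace (tensor_id n k m \<Phi> \<rho> * tensor_id n k m \<Phi> \<rho>))
     \<le> (1 / real k - lambda_max (A_mat n \<Phi> M) / real n) * Re (mtrace (ptrace1 n m \<rho> * ptrace1 n m \<rho>))
       + lambda_max (A_mat n \<Phi> M) * Re (mtrace (\<rho> * \<rho>))"
proof -
  define c where "c = 1 / real k - lambda_max (A_mat n \<Phi> M) / real n"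
  define lam where "lam = lambda_max (A_mat n \<Phi> M)"
  define B where "B = block2 n m \<rho>"
  have B: "B a b \<in> carrier_mat n n" for a b
    by (simp add: B_def block2_carrier)
  have rho_sq: "mtrace (\<rho> * \<rho>) = (\<Sum>a<m. \<Sum>b<m. mtrace (B a b * B b a))"
    using Herm_carrier[OF assms(7)] by (rule mtrace_square_blocks[OF _ B]) (simp add: B_def block2_def)
  have "Re (mtrace (tensor_id n k m \<Phi> \<rho> * tensor_id n k m \<Phi> \<rho>))
      = (\<Sum>a<m. \<Sum>b<m. Re (mtrace (cext \<Phi> (B a b) * cext \<Phi> (B b a))))"
    using mtrace_square_blocks[OF _ cext_carrier[OF assms(4) block2_carrier] tensor_id_index]
    by (simp add: B_def tensor_id_def Re_sum)
  also have "\<dots> \<le> (\<Sum>a<m. \<Sum>b<m. c * Re (mtrace (B a b) * mtrace (B b a)) + lam * Re (mtrace (B a b * B b a)))"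
  proof (intro sum_mono)
    fix a b assume "a \<in> {..<m}" "b \<in> {..<m}"
    then have "B b a = adj (B a b)"
      unfolding B_def by (intro block2_adj[OF assms(7)]) auto
    then show "Re (mtrace (cext \<Phi> (B a b) * cext \<Phi> (B b a)))
        \<le> c * Re (mtrace (B a b) * mtrace (B b a)) + lam * Re (mtrace (B a b * B b a))"
      using Re_mtrace_cext_adj_le[OF assms(1,2,4-6,8) B] by (simp add: c_def lam_def)
  qed
  also have "\<dots> = c * Re (mtrace (ptrace1 n m \<rho> * ptrace1 n m \<rho>)) + lam * Re (mtrace (\<rho> * \<rho>))"
    by (simp add: rho_sq mtrace_square_ptrace1[of n m \<rho>, folded B_def] Re_sum sum.distrib sum_distrib_left)
  finally show ?thesis
    by (simp add: c_def lam_def)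
qed

end
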